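(* Let $\mathcal{C}\subset\mathbb{R}^N$ be a nonempty compact convex set with Euclidean projection $\pi_{\mathcal{C}}$. For every $p\in\mathcal{C}$, every $r>0$ and every unit vector $u\in\mathbb{R}^N$ ($\|u\|=1$), $$\langle u,\pi_{\mathcal{C}}(p+ru)-p\rangle\ge\frac{r}{2}\,\|u\|_{\mathcal{C}}^2(p;r).$$
   Context: Local norm: for $p\in\mathcal{C}$, a vector $u$ and $r>0$, $\|u\|_{\mathcal{C}}(p;r)=\sup_{v\in\mathcal{C},\,\|v-p\|=r}\max\big(\langle u,v-p\rangle/r,\,0\big)$ if there exists $v\in\mathcal{C}$ with $\|v-p\|=r$, and $\|u\|_{\mathcal{C}}(p;r)=0$ otherwise. *)

theory Defs
  imports "HOL-Analysis.Analysis"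
begin

definition local_norm :: "'a::euclidean_space set \<Rightarrow> 'a \<Rightarrow> 'a \<Rightarrow> real \<Rightarrow> real" where
  "local_norm C u p r =
     (if (\<exists>v\<in>C. norm (v - p) = r)
      then (SUP v\<in>{v\<in>C. norm (v - p) = r}. max (inner u (v - p) / r) 0)
      else 0)"

end

theory Submission
  imports Defs
begin

text \<open>Write \<open>q\<close> for the projection of \<open>p + r u\<close> onto \<open>C\<close>. For every \<open>v \<in> C\<close> the point
  \<open>p + s (v - p)\<close>, \<open>0 \<le> s \<le> 1\<close>, lies in \<open>C\<close> and is therefore no closer to \<open>p + r u\<close> than \<open>q\<close>;
  expanding the squared distances gives
  \<open>2 r \<langle>u, q - p\<rangle> \<ge> 2 s r \<langle>u, v - p\<rangle> - s\<^sup>2 \<parallel>v - p\<parallel>\<^sup>2\<close>.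
  For \<open>\<parallel>v - p\<parallel> = r\<close> the choice \<open>s = max (\<langle>u, v - p\<rangle> / r) 0\<close> turns the right-hand side into
  \<open>r\<^sup>2 s\<^sup>2\<close>; hence every term of the supremum defining the local norm is at most
  \<open>sqrt (2 \<langle>u, q - p\<rangle> / r)\<close>.\<close>

lemma closest_point_inner_ge_segment:
  fixes C :: "'a::euclidean_space set"
  assumes "closed C" and "convex C" and "p \<in> C" and "v \<in> C" and "0 \<le> s" and "s \<le> 1"
  shows "2 * s * r * inner u (v - p) - s\<^sup>2 * (norm (v - p))\<^sup>2
           \<le> 2 * r * inner u (closest_point C (p + r *\<^sub>R u) - p)"
proof -
  define a where "a = closest_point C (p + r *\<^sub>R u) - p"
  define d where "d = v - p"
  have "(1 - s) *\<^sub>R p + s *\<^sub>R v \<in> C"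
    using assms(2-6) unfolding convex_alt by blast
  then have "p + s *\<^sub>R d \<in> C"
    by (simp add: d_def algebra_simps)
  then have "dist (p + r *\<^sub>R u) (closest_point C (p + r *\<^sub>R u)) \<le> dist (p + r *\<^sub>R u) (p + s *\<^sub>R d)"
    using closest_point_le [OF assms(1)] by blast
  then have "norm (r *\<^sub>R u - a) \<le> norm (r *\<^sub>R u - s *\<^sub>R d)"
    by (simp add: a_def dist_norm algebra_simps)
  then have "inner (r *\<^sub>R u - a) (r *\<^sub>R u - a) \<le> inner (r *\<^sub>R u - s *\<^sub>R d) (r *\<^sub>R u - s *\<^sub>R d)"
    by (simp add: power2_norm_eq_inner [symmetric] power_mono)
  then have "inner a a - 2 * r * inner u a \<le> s\<^sup>2 * inner d d - 2 * s * r * inner u d"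
    by (simp add: inner_diff_left inner_diff_right inner_commute algebra_simps power2_eq_square)
  with inner_ge_zero [of a] show ?thesis
    unfolding a_def [symmetric] d_def [symmetric] power2_norm_eq_inner by linarith
qed

lemma closest_point_inner_nonneg:
  fixes C :: "'a::euclidean_space set"
  assumes "closed C" and "convex C" and "p \<in> C" and "r > 0"
  shows "0 \<le> inner u (closest_point C (p + r *\<^sub>R u) - p)"
  using closest_point_inner_ge_segment [OF assms(1-3) assms(3), of 0 r u] assms(4)
  by (simp add: zero_le_mult_iff)

lemma closest_point_inner_ge_sphere_term:
  fixes C :: "'a::euclidean_space set"
  assumes "closed C" and "convex C" and "p \<in> C" and "v \<in> C"
    and "r > 0" and "norm u = 1" and "norm (v - p) = r"
  shows "r * (max (inner u (v - p) / r) 0)\<^sup>2 \<le> 2 * inner u (closest_point C (p + r *\<^sub>R u) - p)"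
proof -
  define t where "t = inner u (v - p) / r"
  define s where "s = max t 0"
  have "\<bar>inner u (v - p)\<bar> \<le> r"
    using Cauchy_Schwarz_ineq2 [of u "v - p"] assms(6,7) by simp
  then have "\<bar>t\<bar> \<le> 1"
    using assms(5) by (simp add: t_def abs_div)
  then have "0 \<le> s" and "s \<le> 1"
    by (auto simp: s_def)
  have "s * t = s\<^sup>2"
    by (simp add: s_def max_def power2_eq_square)
  define A where "A = inner u (closest_point C (p + r *\<^sub>R u) - p)"
  have "inner u (v - p) = r * t"
    using assms(5) by (simp add: t_def)
  then have "2 * r\<^sup>2 * (s * t) - r\<^sup>2 * s\<^sup>2 \<le> 2 * r * A"
    using closest_point_inner_ge_segment [OF assms(1-4) \<open>0 \<le> s\<close> \<open>s \<le> 1\<close>, of r u] assms(7)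
    by (simp add: A_def algebra_simps power2_eq_square)
  moreover have "2 * r\<^sup>2 * (s * t) - r\<^sup>2 * s\<^sup>2 = r * (r * s\<^sup>2)"
    using \<open>s * t = s\<^sup>2\<close> by (simp add: power2_eq_square)
  ultimately have "r * (r * s\<^sup>2) \<le> r * (2 * A)"
    by linarith
  with assms(5) show ?thesis
    by (simp add: A_def s_def t_def)
qed

lemma local_norm_nonneg:
  assumes "r > 0"
  shows "0 \<le> local_norm C u p r"
proof (cases "\<exists>v\<in>C. norm (v - p) = r")
  case True
  then obtain v0 where v0: "v0 \<in> {v\<in>C. norm (v - p) = r}"
    by auto
  have "max (inner u (v - p) / r) 0 \<le> norm u" if "norm (v - p) = r" for v
    using Cauchy_Schwarz_ineq2 [of u "v - p"] that assms
    by (auto simp: divide_le_eq abs_le_iff)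
  then have "bdd_above ((\<lambda>v. max (inner u (v - p) / r) 0) ` {v\<in>C. norm (v - p) = r})"
    by (intro bdd_aboveI2 [where M = "norm u"]) auto
  from cSUP_upper [OF v0 this] True show ?thesis
    by (simp add: local_norm_def)
qed (simp add: local_norm_def)

lemma local_norm_le:
  assumes "0 \<le> B" and "\<And>v. v \<in> C \<Longrightarrow> norm (v - p) = r \<Longrightarrow> max (inner u (v - p) / r) 0 \<le> B"
  shows "local_norm C u p r \<le> B"
  using assms unfolding local_norm_def by (auto intro!: cSUP_least)

theorem theorem2p5:
  fixes C :: "(real ^ 'n) set" and p u :: "real ^ 'n" and r :: real
  assumes "C \<noteq> {}" and "compact C" and "convex C"
    and "p \<in> C" and "r > 0" and "norm u = 1"
  shows "inner u (closest_point C (p + r *\<^sub>R u) - p) \<ge> (r / 2) * (local_norm C u p r)\<^sup>2"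
proof -
  define A where "A = inner u (closest_point C (p + r *\<^sub>R u) - p)"
  have "closed C"
    using assms(2) by (rule compact_imp_closed)
  have "0 \<le> A"
    using closest_point_inner_nonneg [OF \<open>closed C\<close> assms(3,4,5)] by (simp add: A_def)
  have "local_norm C u p r \<le> sqrt (2 * A / r)"
  proof (rule local_norm_le)
    fix v
    assume "v \<in> C" and "norm (v - p) = r"
    from closest_point_inner_ge_sphere_term [OF \<open>closed C\<close> assms(3,4) this(1) assms(5,6) this(2)]
    have "(max (inner u (v - p) / r) 0)\<^sup>2 \<le> 2 * A / r"
      using assms(5) by (simp add: A_def field_simps)
    then show "max (inner u (v - p) / r) 0 \<le> sqrt (2 * A / r)"
      using real_le_rsqrt by fastforce
  qed (use \<open>0 \<le> A\<close> assms(5) in simp)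
  then have "(local_norm C u p r)\<^sup>2 \<le> (sqrt (2 * A / r))\<^sup>2"
    using local_norm_nonneg [OF assms(5)] by (rule power_mono)
  also have "\<dots> = 2 * A / r"
    using \<open>0 \<le> A\<close> assms(5) by simp
  finally show ?thesis
    using assms(5) by (simp add: A_def field_simps)
qed

end
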